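(* Let $\mathcal{A}\subset\mathbb{R}^d$ be a finite set and $\mathcal{X}=\{x_1,\dots,x_K\}\subset\mathbb{R}^d$. Let $\tilde{\mathbf p}\in\Delta^{(K)}$ be a minimizer of $\mathbf p\mapsto\max_{u,u'\in\mathcal{A}}\|u-u'\|^2_{\mathbf\Sigma_{-1,\mathbf p}^{-1}}$ over $\Delta^{(K)}$ with $\tilde p_1=0$, and define $\mathbf p_{\mathrm{xor}}(\mathcal{A}):=(\tfrac12,\tfrac12\tilde p_2,\dots,\tfrac12\tilde p_K)\in\Delta^{(K)}$. Then $$\mathcal{V}_{\mathrm{cov}}(\mathcal{A}:\mathcal{X},\mathbf p_{\mathrm{xor}}(\mathcal{A}))\le 4\,\mathcal{V}^\star_{\mathrm{lin}}(\mathcal{A}:\mathcal{X}-x_1).$$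
   Context: $\Delta^{(K)}$ is the probability simplex on $[K]$. For $\mathbf p\in\Delta^{(K)}$: $\bar x_{\mathbf p}:=\sum_ip_ix_i$, $\mathbf\Sigma_{\mathrm{cov},\mathbf p}:=\sum_{i=1}^Kp_i(x_i-\bar x_{\mathbf p})(x_i-\bar x_{\mathbf p})^\top$, and $\mathbf\Sigma_{-1,\mathbf p}:=\sum_{i=1}^Kp_i(x_i-x_1)(x_i-x_1)^\top$. For PSD $\mathbf A$, $\|x\|_{\mathbf A^{-1}}:=\lim_{\lambda\to0^+}\sqrt{x^\top(\mathbf A+\lambda\mathbf I_d)^{-1}x}$ (possibly $+\infty$). Define $\mathcal{V}_{\mathrm{cov}}(\mathcal{A}:\mathcal{X},\mathbf p):=\max_{u,u'\in\mathcal{A}}\|u-u'\|^2_{\mathbf\Sigma_{\mathrm{cov},\mathbf p}^{-1}}$ and $\mathcal{V}^\star_{\mathrm{lin}}(\mathcal{A}:\mathcal{X}-x_1):=\min_{\mathbf p\in\Delta^{(K)}}\max_{u,u'\in\mathcal{A}}\|u-u'\|^2_{\mathbf\Sigma_{-1,\mathbf p}^{-1}}$. (A minimizer with $\tilde p_1=0$ exists since the term $i=1$ contributes zero to $\mathbf\Sigma_{-1,\mathbf p}$.) *)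

theory Defs
  imports "HOL-Analysis.Analysis"
begin

text \<open>Vectors in R^d are modelled as real^'d; the points are indexed x 1, ..., x K.\<close>

definition outer :: "real^'d \<Rightarrow> real^'d^'d" where
  "outer v = (\<chi> i j. v $ i * v $ j)"

definition prob_simplex :: "nat \<Rightarrow> (nat \<Rightarrow> real) set" where
  "prob_simplex K = {p. (\<forall>i\<in>{1..K}. 0 \<le> p i) \<and> (\<Sum>i=1..K. p i) = 1}"

definition xbar :: "nat \<Rightarrow> (nat \<Rightarrow> real^'d) \<Rightarrow> (nat \<Rightarrow> real) \<Rightarrow> real^'d" where
  "xbar K x p = (\<Sum>i=1..K. p i *\<^sub>R x i)"

definition Sigma_cov :: "nat \<Rightarrow> (nat \<Rightarrow> real^'d) \<Rightarrow> (nat \<Rightarrow> real) \<Rightarrow> real^'d^'d" where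
  "Sigma_cov K x p = (\<Sum>i=1..K. p i *\<^sub>R outer (x i - xbar K x p))"

definition Sigma_m1 :: "nat \<Rightarrow> (nat \<Rightarrow> real^'d) \<Rightarrow> (nat \<Rightarrow> real) \<Rightarrow> real^'d^'d" where
  "Sigma_m1 K x p = (\<Sum>i=1..K. p i *\<^sub>R outer (x i - x 1))"

definition norm_inv :: "real^'d^'d \<Rightarrow> real^'d \<Rightarrow> ereal" where
  "norm_inv A v = Lim (at_right 0)
     (\<lambda>l::real. ereal (sqrt (v \<bullet> (matrix_inv (A + l *\<^sub>R mat 1) *v v))))"

definition V_cov :: "(real^'d) set \<Rightarrow> nat \<Rightarrow> (nat \<Rightarrow> real^'d) \<Rightarrow> (nat \<Rightarrow> real) \<Rightarrow> ereal" where
  "V_cov A K x p = (SUP uu\<in>A \<times> A. (norm_inv (Sigma_cov K x p) (fst uu - snd uu))^2)"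

definition V_lin_obj :: "(real^'d) set \<Rightarrow> nat \<Rightarrow> (nat \<Rightarrow> real^'d) \<Rightarrow> (nat \<Rightarrow> real) \<Rightarrow> ereal" where
  "V_lin_obj A K x p = (SUP uu\<in>A \<times> A. (norm_inv (Sigma_m1 K x p) (fst uu - snd uu))^2)"

definition V_lin_star :: "(real^'d) set \<Rightarrow> nat \<Rightarrow> (nat \<Rightarrow> real^'d) \<Rightarrow> ereal" where
  "V_lin_star A K x = (INF p\<in>prob_simplex K. V_lin_obj A K x p)"

definition p_xor :: "(nat \<Rightarrow> real) \<Rightarrow> nat \<Rightarrow> real" where
  "p_xor pt = (\<lambda>i. if i = 1 then 1/2 else pt i / 2)"

end

theory Submission
  imports Defs
begin

text \<open>
  Let \<open>p\<close> be the minimiser with \<open>p 1 = 0\<close>, so that \<open>p_xor p = p/2 + \<delta>\<^sub>1/2\<close>.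
  In a direction \<open>w\<close>, with \<open>a\<^sub>i = w \<bullet> x\<^sub>i\<close> and expectations \<open>E\<close> under \<open>p\<close>, the variance of \<open>a\<close>
  under \<open>p_xor p\<close> is \<open>E (a - a\<^sub>1)\<^sup>2 / 2 - (E a - a\<^sub>1)\<^sup>2 / 4 \<ge> E (a - a\<^sub>1)\<^sup>2 / 4\<close>, i.e.
  \<open>Sigma_m1 p \<le> 4 Sigma_cov (p_xor p)\<close> in the Loewner order. Inversion reverses this order, also
  for the ridge-regularised inverses whose limit defines \<open>norm_inv\<close>, so each squared norm in
  \<open>V_cov\<close> is at most 4 times the corresponding one in \<open>V_lin_obj\<close> at \<open>p\<close>, and \<open>p\<close> attains
  \<open>V_lin_star\<close>.
\<close>

definition quad_form :: "real^'n^'n \<Rightarrow> real^'n \<Rightarrow> real" where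
  "quad_form M w = w \<bullet> (M *v w)"

definition pos_semidef :: "real^'n^'n \<Rightarrow> bool" where
  "pos_semidef M \<longleftrightarrow> transpose M = M \<and> (\<forall>w. 0 \<le> quad_form M w)"

definition pos_def :: "real^'n^'n \<Rightarrow> bool" where
  "pos_def M \<longleftrightarrow> transpose M = M \<and> (\<forall>w. w \<noteq> 0 \<longrightarrow> 0 < quad_form M w)"

lemma quad_form_add: "quad_form (A + B) w = quad_form A w + quad_form B w"
  by (simp add: quad_form_def matrix_vector_mult_add_rdistrib inner_add_right)

lemma quad_form_scaleR: "quad_form (c *\<^sub>R A) w = c * quad_form A w"
  by (simp add: quad_form_def scaleR_matrix_vector_assoc[symmetric])

lemma quad_form_mat_1: "quad_form (mat 1) w = w \<bullet> w"
  by (simp add: quad_form_def)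

lemma quad_form_0: "quad_form 0 w = 0"
  by (simp add: quad_form_def)

lemma quad_form_sum: "quad_form (sum f I) w = (\<Sum>i\<in>I. quad_form (f i) w)"
  by (induction I rule: infinite_finite_induct) (simp_all add: quad_form_0 quad_form_add)

lemma outer_mult_vector: "outer y *v w = (y \<bullet> w) *\<^sub>R y"
  by (simp add: outer_def vec_eq_iff matrix_vector_mult_def inner_vec_def sum_distrib_left mult_ac)

lemma quad_form_outer: "quad_form (outer y) w = (w \<bullet> y)\<^sup>2"
  by (simp add: quad_form_def outer_mult_vector power2_eq_square inner_commute)

lemma transpose_add: "transpose (A + B) = transpose A + transpose (B :: 'a::plus^'n^'m)"
  by (simp add: transpose_def vec_eq_iff)

lemma transpose_0: "transpose (0 :: 'a::zero^'n^'m) = 0"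
  by (simp add: transpose_def vec_eq_iff)

lemma transpose_sum: "transpose (sum f I) = (\<Sum>i\<in>I. transpose (f i :: 'a::comm_monoid_add^'n^'m))"
  by (induction I rule: infinite_finite_induct) (simp_all add: transpose_0 transpose_add)

lemma transpose_outer: "transpose (outer y) = outer y"
  by (simp add: transpose_def outer_def mult.commute)

lemma inner_matrix_vector_symmetric:
  fixes M :: "real^'n^'n"
  assumes "transpose M = M"
  shows "w \<bullet> (M *v u) = u \<bullet> (M *v w)"
proof -
  have "w \<bullet> (M *v u) = (w v* M) \<bullet> u"
    by (rule dot_lmul_matrix[symmetric])
  also have "w v* M = M *v w"
    by (metis assms vector_transpose_matrix)
  finally show ?thesis
    by (simp add: inner_commute)
qed

lemma pos_semidef_add_pos_def:
  assumes "pos_semidef M" "0 < l"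
  shows "pos_def (M + l *\<^sub>R mat 1)"
  using assms
  by (auto simp: pos_semidef_def pos_def_def quad_form_add quad_form_scaleR quad_form_mat_1
                 transpose_add transpose_scalar add_nonneg_pos)

lemma pos_def_right_inverse:
  assumes "pos_def M"
  shows "M ** matrix_inv M = mat 1"
proof -
  have "\<forall>w. M *v w = 0 \<longrightarrow> w = 0"
    using assms by (metis pos_def_def quad_form_def inner_zero_right less_irrefl)
  then obtain B where "B ** M = mat 1"
    using matrix_left_invertible_ker by blast
  then have "\<exists>B. M ** B = mat 1 \<and> B ** M = mat 1"
    using matrix_left_right_inverse by blast
  then show ?thesis
    unfolding matrix_inv_def by (rule someI2_ex) blast
qed

text \<open>The quadratic form of the inverse is a Legendre transform:
  \<open>v \<bullet> (M\<inverse> v) = max\<^sub>w (2 (w \<bullet> v) - w \<bullet> M w)\<close>, attained at \<open>w = M\<inverse> v\<close>.\<close>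

lemma pos_def_inverse_quad_form:
  assumes "pos_def M"
  shows "v \<bullet> (matrix_inv M *v v) = 2 * ((matrix_inv M *v v) \<bullet> v) - quad_form M (matrix_inv M *v v)"
proof -
  have "M *v (matrix_inv M *v v) = v"
    by (simp add: matrix_vector_mul_assoc pos_def_right_inverse[OF assms])
  then show ?thesis
    by (simp add: quad_form_def inner_commute)
qed

lemma pos_def_inverse_quad_form_ge:
  assumes "pos_def M"
  shows "2 * (w \<bullet> v) - quad_form M w \<le> v \<bullet> (matrix_inv M *v v)"
proof -
  define u where "u = matrix_inv M *v v"
  have Mu: "M *v u = v"
    by (simp add: u_def matrix_vector_mul_assoc pos_def_right_inverse[OF assms])
  have symm: "transpose M = M" and pos: "\<forall>w. w \<noteq> 0 \<longrightarrow> 0 < quad_form M w"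
    using assms by (auto simp: pos_def_def)
  have "0 \<le> quad_form M (w - u)"
    using pos by (cases "w = u") (auto simp: quad_form_def less_imp_le)
  also have "quad_form M (w - u) = quad_form M w - 2 * (w \<bullet> v) + u \<bullet> v"
    using inner_matrix_vector_symmetric[OF symm, of u w] Mu
    by (simp add: quad_form_def matrix_vector_mult_diff_distrib inner_diff_left inner_diff_right
                  inner_commute)
  finally show ?thesis
    by (simp add: u_def inner_commute)
qed

lemma inverse_quad_form_le_scaled:
  assumes "pos_def S" "pos_def C" "0 < c" "\<forall>w. quad_form S w \<le> c * quad_form C w"
  shows "v \<bullet> (matrix_inv C *v v) \<le> c * (v \<bullet> (matrix_inv S *v v))"
proof -
  define u where "u = matrix_inv C *v v"
  have "v \<bullet> (matrix_inv C *v v) = 2 * (u \<bullet> v) - quad_form C u"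
    unfolding u_def by (rule pos_def_inverse_quad_form[OF assms(2)])
  also have "\<dots> \<le> 2 * (u \<bullet> v) - quad_form S u / c"
    using assms(3,4) by (simp add: pos_divide_le_eq mult.commute)
  also have "\<dots> = c * (2 * ((u /\<^sub>R c) \<bullet> v) - quad_form S (u /\<^sub>R c))"
    using assms(3)
    by (simp add: quad_form_def matrix_vector_mult_scaleR field_simps)
  also have "\<dots> \<le> c * (v \<bullet> (matrix_inv S *v v))"
    using assms(3) by (intro mult_left_mono pos_def_inverse_quad_form_ge[OF assms(1)]) simp
  finally show ?thesis .
qed

lemma Lim_at_right_antimono_eq_SUP:
  fixes f :: "real \<Rightarrow> 'a::{complete_linorder, linorder_topology}"
  assumes antimono: "\<And>s t. a < s \<Longrightarrow> s \<le> t \<Longrightarrow> f t \<le> f s"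
  shows "Lim (at_right a) f = (SUP t\<in>{a<..}. f t)"
proof (rule tendsto_Lim)
  show "(f \<longlongrightarrow> (SUP t\<in>{a<..}. f t)) (at_right a)"
  proof (rule order_tendstoI)
    fix y assume "y < (SUP t\<in>{a<..}. f t)"
    then obtain s where s: "a < s" "y < f s"
      by (auto simp: less_SUP_iff)
    have "eventually (\<lambda>t. t \<in> {a<..<s}) (at_right a)"
      using eventually_at_right_real s(1) by blast
    then show "eventually (\<lambda>t. y < f t) (at_right a)"
      by eventually_elim (use s antimono in \<open>auto intro: less_le_trans\<close>)
  next
    fix y assume "(SUP t\<in>{a<..}. f t) < y"
    moreover have "eventually (\<lambda>t. f t \<le> (SUP t\<in>{a<..}. f t)) (at_right a)"
      using eventually_at_right_less[of a] by eventually_elim (auto intro: SUP_upper)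
    ultimately show "eventually (\<lambda>t. f t < y) (at_right a)"
      by (auto elim: eventually_mono intro: le_less_trans)
  qed
qed simp

lemma norm_inv_eq_SUP:
  assumes "pos_semidef M"
  shows "norm_inv M v = (SUP l\<in>{0<..}. ereal (sqrt (v \<bullet> (matrix_inv (M + l *\<^sub>R mat 1) *v v))))"
  unfolding norm_inv_def
proof (rule Lim_at_right_antimono_eq_SUP)
  fix s t :: real assume "0 < s" "s \<le> t"
  then have "v \<bullet> (matrix_inv (M + t *\<^sub>R mat 1) *v v) \<le> 1 * (v \<bullet> (matrix_inv (M + s *\<^sub>R mat 1) *v v))"
    using assms
    by (intro inverse_quad_form_le_scaled pos_semidef_add_pos_def)
       (auto simp: quad_form_add quad_form_scaleR quad_form_mat_1 mult_right_mono)
  then show "ereal (sqrt (v \<bullet> (matrix_inv (M + t *\<^sub>R mat 1) *v v)))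
           \<le> ereal (sqrt (v \<bullet> (matrix_inv (M + s *\<^sub>R mat 1) *v v)))"
    by simp
qed

lemma norm_inv_nonneg:
  assumes "pos_semidef M"
  shows "0 \<le> norm_inv M v"
proof -
  have "0 \<le> v \<bullet> (matrix_inv (M + 1 *\<^sub>R mat 1) *v v)"
    using pos_def_inverse_quad_form_ge[OF pos_semidef_add_pos_def[OF assms], of 1 0 v]
    by (simp add: quad_form_def)
  also have "ereal (sqrt \<dots>) \<le> norm_inv M v"
    unfolding norm_inv_eq_SUP[OF assms] by (intro SUP_upper) auto
  finally show ?thesis by (simp add: zero_ereal_def)
qed

lemma norm_inv_le_scaled:
  assumes S: "pos_semidef S" and C: "pos_semidef C" and "0 < c"
    and le: "\<forall>w. quad_form S w \<le> c\<^sup>2 * quad_form C w"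
  shows "norm_inv C v \<le> c * norm_inv S v"
proof -
  let ?f = "\<lambda>M l. v \<bullet> (matrix_inv (M + l *\<^sub>R mat 1) *v v)"
  have "ereal (sqrt (?f C l)) \<le> c * norm_inv S v" if "0 < l" for l
  proof -
    have "?f C l \<le> c\<^sup>2 * ?f S (c\<^sup>2 * l)"
      using S C le \<open>0 < c\<close> \<open>0 < l\<close>
      by (intro inverse_quad_form_le_scaled pos_semidef_add_pos_def)
         (auto simp: quad_form_add quad_form_scaleR quad_form_mat_1 algebra_simps)
    then have "sqrt (?f C l) \<le> c * sqrt (?f S (c\<^sup>2 * l))"
      using \<open>0 < c\<close> by (metis real_sqrt_le_mono real_sqrt_mult real_sqrt_abs abs_of_pos)
    then have "ereal (sqrt (?f C l)) \<le> ereal c * ereal (sqrt (?f S (c\<^sup>2 * l)))"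
      by simp
    also have "ereal (sqrt (?f S (c\<^sup>2 * l))) \<le> norm_inv S v"
      unfolding norm_inv_eq_SUP[OF S] using \<open>0 < c\<close> \<open>0 < l\<close> by (intro SUP_upper) auto
    then have "ereal c * ereal (sqrt (?f S (c\<^sup>2 * l))) \<le> c * norm_inv S v"
      using \<open>0 < c\<close> by (intro ereal_mult_left_mono) auto
    finally show ?thesis .
  qed
  then show ?thesis
    unfolding norm_inv_eq_SUP[OF C] by (intro SUP_least) auto
qed

lemma weighted_sum_sq_dev_eq:
  fixes p a :: "'i \<Rightarrow> real"
  assumes "sum p I = 1"
  shows "(\<Sum>i\<in>I. p i * (a i - b)\<^sup>2)
       = (\<Sum>i\<in>I. p i * (a i - (\<Sum>k\<in>I. p k * a k))\<^sup>2) + ((\<Sum>k\<in>I. p k * a k) - b)\<^sup>2"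
proof -
  define m where "m = (\<Sum>k\<in>I. p k * a k)"
  have "(\<Sum>i\<in>I. p i * (a i - b)\<^sup>2)
      = (\<Sum>i\<in>I. p i * (a i - m)\<^sup>2 + 2 * (m - b) * (p i * (a i - m)) + (m - b)\<^sup>2 * p i)"
    by (intro sum.cong) (auto simp: power2_eq_square algebra_simps)
  also have "(\<Sum>i\<in>I. p i * (a i - m)) = 0"
    using assms by (simp add: right_diff_distrib sum_subtractf m_def flip: sum_distrib_right)
  ultimately show ?thesis
    using assms by (simp add: sum.distrib m_def flip: sum_distrib_left)
qed

text \<open>The variance of the mixture \<open>p/2 + \<delta>\<^sub>j/2\<close> is
  \<open>E\<^sub>p (a - a\<^sub>j)\<^sup>2 / 2 - (E\<^sub>p a - a\<^sub>j)\<^sup>2 / 4\<close>, and Jensen bounds the subtracted term.\<close>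

lemma weighted_variance_half_point_mass_ge:
  fixes p q a :: "'i \<Rightarrow> real"
  assumes "finite I" "j \<in> I" "\<forall>i\<in>I. 0 \<le> p i" "sum p I = 1"
    and q: "\<And>i. q i = p i / 2 + (if i = j then 1/2 else 0)"
  shows "(\<Sum>i\<in>I. p i * (a i - a j)\<^sup>2) \<le> 4 * (\<Sum>i\<in>I. q i * (a i - (\<Sum>k\<in>I. q k * a k))\<^sup>2)"
proof -
  have mix: "(\<Sum>i\<in>I. q i * f i) = (\<Sum>i\<in>I. p i * f i) / 2 + f j / 2" for f
  proof -
    have "(\<Sum>i\<in>I. q i * f i) = (\<Sum>i\<in>I. p i * f i / 2 + (if i = j then f i / 2 else 0))"
      by (intro sum.cong) (auto simp: q field_simps)
    then show ?thesis
      using assms(1,2) by (simp add: sum.distrib sum_divide_distrib)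
  qed
  define mp where "mp = (\<Sum>k\<in>I. p k * a k)"
  define P where "P = (\<Sum>i\<in>I. p i * (a i - a j)\<^sup>2)"
  define Vq where "Vq = (\<Sum>i\<in>I. q i * (a i - (\<Sum>k\<in>I. q k * a k))\<^sup>2)"
  have "sum q I = 1"
    using mix[of "\<lambda>_. 1"] assms(4) by simp
  moreover have "(\<Sum>i\<in>I. q i * (a i - a j)\<^sup>2) = P / 2"
    using mix[of "\<lambda>i. (a i - a j)\<^sup>2"] by (simp add: P_def)
  moreover have "(\<Sum>k\<in>I. q k * a k) - a j = (mp - a j) / 2"
    using mix[of a] by (simp add: mp_def field_simps)
  ultimately have "P / 2 = Vq + ((mp - a j) / 2)\<^sup>2"
    using weighted_sum_sq_dev_eq[of q I a "a j"] by (simp add: Vq_def)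
  moreover have "(mp - a j)\<^sup>2 \<le> P"
    using weighted_sum_sq_dev_eq[OF assms(4), of a "a j"] assms(3)
    by (simp add: P_def mp_def sum_nonneg)
  ultimately show ?thesis
    by (simp add: P_def Vq_def power_divide)
qed

lemma quad_form_Sigma_cov:
  "quad_form (Sigma_cov K x p) w = (\<Sum>i=1..K. p i * (w \<bullet> x i - (\<Sum>k=1..K. p k * (w \<bullet> x k)))\<^sup>2)"
  by (simp add: Sigma_cov_def xbar_def quad_form_sum quad_form_scaleR quad_form_outer
                inner_diff_right inner_sum_right)

lemma quad_form_Sigma_m1: "quad_form (Sigma_m1 K x p) w = (\<Sum>i=1..K. p i * (w \<bullet> x i - w \<bullet> x 1)\<^sup>2)"
  by (simp add: Sigma_m1_def quad_form_sum quad_form_scaleR quad_form_outer inner_diff_right)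

lemma pos_semidef_Sigma_cov: "\<forall>i\<in>{1..K}. 0 \<le> p i \<Longrightarrow> pos_semidef (Sigma_cov K x p)"
  unfolding pos_semidef_def quad_form_Sigma_cov
  by (auto simp: Sigma_cov_def transpose_sum transpose_scalar transpose_outer intro!: sum_nonneg)

lemma pos_semidef_Sigma_m1: "\<forall>i\<in>{1..K}. 0 \<le> p i \<Longrightarrow> pos_semidef (Sigma_m1 K x p)"
  unfolding pos_semidef_def quad_form_Sigma_m1
  by (auto simp: Sigma_m1_def transpose_sum transpose_scalar transpose_outer intro!: sum_nonneg)

lemma Sigma_m1_le_Sigma_cov_p_xor:
  assumes "pt \<in> prob_simplex K" "pt 1 = 0"
  shows "quad_form (Sigma_m1 K x pt) w \<le> 2\<^sup>2 * quad_form (Sigma_cov K x (p_xor pt)) w"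
proof -
  have pt: "\<forall>i\<in>{1..K}. 0 \<le> pt i" "sum pt {1..K} = 1"
    using assms(1) by (auto simp: prob_simplex_def)
  then have "1 \<in> {1..K}"
    by (cases "K = 0") auto
  moreover have "p_xor pt i = pt i / 2 + (if i = 1 then 1/2 else 0)" for i
    using assms(2) by (simp add: p_xor_def)
  ultimately show ?thesis
    unfolding quad_form_Sigma_m1 quad_form_Sigma_cov
    using weighted_variance_half_point_mass_ge[OF _ _ pt, where j = 1 and a = "\<lambda>i. w \<bullet> x i"]
    by simp
qed

lemma ereal_power2_mono: "0 \<le> a \<Longrightarrow> a \<le> (b::ereal) \<Longrightarrow> a\<^sup>2 \<le> b\<^sup>2"
  by (cases a; cases b) (auto simp: power2_eq_square mult_mono)

theorem mainTheorem4:
  fixes A :: "(real^'d) set" and K :: nat and x :: "nat \<Rightarrow> real^'d" and pt :: "nat \<Rightarrow> real"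
  assumes "finite A"
    and "pt \<in> prob_simplex K"
    and "pt 1 = 0"
    and "\<forall>p\<in>prob_simplex K. V_lin_obj A K x pt \<le> V_lin_obj A K x p"
  shows "V_cov A K x (p_xor pt) \<le> 4 * V_lin_star A K x"
proof -
  let ?C = "Sigma_cov K x (p_xor pt)" and ?S = "Sigma_m1 K x pt"
  have star: "V_lin_star A K x = V_lin_obj A K x pt"
    unfolding V_lin_star_def by (rule antisym) (use assms(2,4) in \<open>auto intro: INF_lower INF_greatest\<close>)
  have "\<forall>i\<in>{1..K}. 0 \<le> pt i"
    using assms(2) by (auto simp: prob_simplex_def)
  then have S: "pos_semidef ?S" and C: "pos_semidef ?C"
    by (auto simp: p_xor_def intro!: pos_semidef_Sigma_m1 pos_semidef_Sigma_cov)
  have "(norm_inv ?C v)\<^sup>2 \<le> 4 * (norm_inv ?S v)\<^sup>2" for v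
  proof -
    have "norm_inv ?C v \<le> 2 * norm_inv ?S v"
      using norm_inv_le_scaled[OF S C, of 2] Sigma_m1_le_Sigma_cov_p_xor[OF assms(2,3), where x = x]
      by simp
    then have "(norm_inv ?C v)\<^sup>2 \<le> (2 * norm_inv ?S v)\<^sup>2"
      by (rule ereal_power2_mono[OF norm_inv_nonneg[OF C]])
    then show ?thesis
      by (simp add: power_mult_distrib)
  qed
  moreover have "4 * (norm_inv ?S (fst uu - snd uu))\<^sup>2 \<le> 4 * V_lin_obj A K x pt" if "uu \<in> A \<times> A" for uu
    unfolding V_lin_obj_def by (intro ereal_mult_left_mono SUP_upper that) auto
  ultimately show ?thesis
    unfolding star V_cov_def by (intro SUP_least) (meson order_trans)
qed

end
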